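(* Let $S$ be a DRC-semigroup, with projection algebra $\mathbf P(S)$, category $\mathcal C(S)$ and map $\varepsilon(S):\mathcal C(\mathbf P(S))\to\mathcal C(S)$, $[p_1,\dots,p_k]\mapsto p_1p_2\cdots p_k$ (product in $S$). Then $(\mathbf P(S),\mathcal C(S),\varepsilon(S))$ is a chained projection category, and the assignment $S\mapsto(\mathbf P(S),\mathcal C(S),\varepsilon(S))$, $\phi\mapsto\phi$ is a functor $\mathbf{DRC}\to\mathbf{CPC}$ (i.e.\ every DRC-morphism $S\to S'$ is a chained projection functor between the corresponding triples).
   Context: \textbf{DRC-semigroups.} A DRC-semigroup is an algebra $(S,\cdot,D,R)$ where $(S,\cdot)$ is a semigroup and $D,R:S\to S$ satisfy, for all $a,b$: $D(a)a=a$, $aR(a)=a$; $D(ab)=D(aD(b))$, $R(ab)=R(R(a)b)$; $D(ab)=D(a)D(ab)D(a)$, $R(ab)=R(b)R(ab)R(b)$; $R(D(a))=D(a)$, $D(R(a))=R(a)$. DRC-morphisms preserve $\cdot,D,R$; $\mathbf{DRC}$ is the resulting category. The projections are $\mathbf P(S)=\{D(a):a\in S\}=\{p\in S:p^2=p=D(p)=R(p)\}$, made into a projection algebra by $q\theta_p=R(qp)$, $q\delta_p=D(pq)$. The category $\mathcal C(S)$ has morphism set $S$, object set $\mathbf P(S)$, $\mathbf d(a)=D(a)$, $\mathbf r(a)=R(a)$, $a\circ b=ab$ when $R(a)=D(b)$; for $p\le D(a)$ and $q\le R(a)$ (order on $\mathbf P(S)$: $p\le q\iff p=pq=qp$) left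 and right restrictions are ${}_p\lfloor a=pa$ and $a\rfloor_q=aq$, and $a\le_l b\iff a={}_{D(a)}\lfloor b$, $a\le_r b\iff a=b\rfloor_{R(a)}$. \textbf{Projection algebras.} Maps are written on the right and composed left to right. A projection algebra is a set $P$ with maps $\theta_p,\delta_p:P\to P$ ($p\in P$) such that for all $p,q$: $p\theta_p=p$, $p\delta_p=p$; $p\theta_{q\theta_p}=q\theta_p$, $p\delta_{q\delta_p}=q\delta_p$; $\theta_q\theta_{q\theta_p}=\theta_q\theta_p$, $\delta_q\delta_{q\delta_p}=\delta_q\delta_p$; $\theta_p\delta_p=\theta_p$, $\delta_p\theta_p=\delta_p$; $\theta_{p\delta_q}\theta_p=\theta_q\theta_p$, $\delta_{p\theta_q}\delta_p=\delta_q\delta_p$. Order: $p\le q\iff p=p\theta_q$. Relation: $p\,\mathscr F\,q\iff p=q\delta_p$ and $q=p\theta_q$. Projection algebra morphisms preserve all $\theta$ and $\delta$ operations. \textbf{Biordered categories.} A small category is identified with its morphisms, objects with identities ($v\mathcal C$); $\mathbf d,\mathbf r$ domain/codomain, $a\circ b$ defined iff $\mathbf r(a)=\mathbf d(b)$. A left-ordered category is $(\mathcal C,\le)$, $\le$ a partial order with: $a\le b\Rightarrow \mathbf d(a)\le\mathbf d(b),\mathbf r(a)\le\mathbf r(b)$; $a\le b,c\le c'$ with $a\circ c,b\circ c'$ defined $\Rightarrow a\circ c\le b\circ c'$; for each object $p\le\mathbf d(a)$ a unique $u\le a$ with $\mathbf d(u)=p$ (denoted ${}_p\lfloor a$). Right-ordered: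 dually, unique $v\le a$ with $\mathbf r(v)=q$ for object $q\le\mathbf r(a)$ (denoted $a\rfloor_q$). A biordered category $(\mathcal C,\le_l,\le_r)$ is left-ordered under $\le_l$, right-ordered under $\le_r$, with $\le_l,\le_r$ equal on $v\mathcal C$. Biordered morphisms are functors preserving both orders. $t^\downarrow=\{s:s\le t\}$, $\mathcal C(q,r)=\{a:\mathbf d(a)=q,\mathbf r(a)=r\}$. \textbf{Projection categories.} A weak projection category $(P,\mathcal C)$: $\mathcal C$ biordered, $P=v\mathcal C$ a projection algebra whose order is the restriction of $\le_l$ and of $\le_r$. For $a\in\mathcal C$: $\vartheta_a:\mathbf d(a)^\downarrow\to\mathbf r(a)^\downarrow$, $p\vartheta_a=\mathbf r({}_p\lfloor a)$; $\vartheta'_a:\mathbf r(a)^\downarrow\to\mathbf d(a)^\downarrow$, $q\vartheta'_a=\mathbf d(a\rfloor_q)$; $\Theta_a=\theta_{\mathbf d(a)}\vartheta_a$, $\Delta_a=\delta_{\mathbf r(a)}\vartheta'_a$ (maps $P\to P$). A projection category additionally satisfies (C1): $\Theta_{a\rfloor_q}=\Theta_a\theta_q$ and $\Delta_{{}_p\lfloor a}=\Delta_a\delta_p$ for $p\le\mathbf d(a)$, $q\le\mathbf r(a)$. \textbf{Chain category.} Paths of $P$: tuples $(p_1,\dots,p_k)$ with $p_1\mathscr F p_2\mathscr F\cdots\mathscr F p_k$, $\mathbf d=p_1,\mathbf r=p_k$, composition $(p_1,\dots,p_k)\circ(p_k,\dots,p_l)=(p_1,\dots,p_l)$; restrictions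 ${}_q\lfloor(p_1,\dots,p_k)=(q_1,\dots,q_k)$ with $q_1=q\le p_1$, $q_i=q_{i-1}\theta_{p_i}$, and $(p_1,\dots,p_k)\rfloor_r=(r_1,\dots,r_k)$ with $r_k=r\le p_k$, $r_i=r_{i+1}\delta_{p_i}$; this is a biordered category. The chain category $\mathcal C(P)$ is its quotient by the congruence generated by $(p,p)\approx(p)$, a biordered category with elements $[p_1,\dots,p_k]$ and object set $P$. \textbf{Chained projection categories.} An evaluation map is a biordered functor $\varepsilon:\mathcal C(P)\to\mathcal C$ with $\varepsilon[p]=p$. For $b\in\mathcal C(q,r)$, $p,s\in P$ let $e=s\Delta_b\delta_p$, $e_1=s\Delta_b\delta_{p\theta_q}$, $e_2=p\theta_{s\Delta_b}$, $f=p\Theta_b\theta_s$, $f_1=s\delta_{p\Theta_b}$, $f_2=p\Theta_b\theta_{s\delta_r}$ (then $e\mathscr F e_1$, $e\mathscr F e_2$, $f_1\mathscr F f$, $f_2\mathscr F f$ and the following are defined), $\lambda(p,b,s)=\varepsilon[e,e_1]\circ({}_{p\theta_q}\lfloor b)\rfloor_{f_1}\circ\varepsilon[f_1,f]$, $\rho(p,b,s)=\varepsilon[e,e_2]\circ{}_{e_2}\lfloor(b\rfloor_{s\delta_r})\circ\varepsilon[f_2,f]$. A chained projection category is $(P,\mathcal C,\varepsilon)$ with $(P,\mathcal C)$ a projection category, $\varepsilon$ an evaluation map, and (C2) $\lambda(p,b,s)=\rho(p,b,s)$ for all $b,p,s$. Chained projection functors are biordered morphisms $\phi$ whose object restriction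 is a projection algebra morphism and with $(\varepsilon[p_1,\dots,p_k])\phi=\varepsilon'[p_1\phi,\dots,p_k\phi]$; $\mathbf{CPC}$ is the resulting category. *)

theory Defs
  imports Main
begin

definition drc :: "'a set \<Rightarrow> ('a \<Rightarrow> 'a \<Rightarrow> 'a) \<Rightarrow> ('a \<Rightarrow> 'a) \<Rightarrow> ('a \<Rightarrow> 'a) \<Rightarrow> bool" where
  "drc S m D R \<longleftrightarrow>
     (\<forall>a\<in>S. \<forall>b\<in>S. m a b \<in> S) \<and> (\<forall>a\<in>S. D a \<in> S \<and> R a \<in> S) \<and>
     (\<forall>a\<in>S. \<forall>b\<in>S. \<forall>c\<in>S. m (m a b) c = m a (m b c)) \<and>
     (\<forall>a\<in>S. m (D a) a = a \<and> m a (R a) = a) \<and>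
     (\<forall>a\<in>S. \<forall>b\<in>S. D (m a b) = D (m a (D b)) \<and> R (m a b) = R (m (R a) b)) \<and>
     (\<forall>a\<in>S. \<forall>b\<in>S. D (m a b) = m (m (D a) (D (m a b))) (D a) \<and>
                    R (m a b) = m (m (R b) (R (m a b))) (R b)) \<and>
     (\<forall>a\<in>S. R (D a) = D a \<and> D (R a) = R a)"

definition drc_morphism ::
  "'a set \<Rightarrow> ('a \<Rightarrow> 'a \<Rightarrow> 'a) \<Rightarrow> ('a \<Rightarrow> 'a) \<Rightarrow> ('a \<Rightarrow> 'a) \<Rightarrow>
   'b set \<Rightarrow> ('b \<Rightarrow> 'b \<Rightarrow> 'b) \<Rightarrow> ('b \<Rightarrow> 'b) \<Rightarrow> ('b \<Rightarrow> 'b) \<Rightarrow> ('a \<Rightarrow> 'b) \<Rightarrow> bool" where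
  "drc_morphism S m D R S' m' D' R' \<phi> \<longleftrightarrow>
     (\<forall>a\<in>S. \<phi> a \<in> S') \<and>
     (\<forall>a\<in>S. \<forall>b\<in>S. \<phi> (m a b) = m' (\<phi> a) (\<phi> b)) \<and>
     (\<forall>a\<in>S. \<phi> (D a) = D' (\<phi> a) \<and> \<phi> (R a) = R' (\<phi> a))"

text \<open>\<open>th P p q\<close> is \<open>q \<theta>_p\<close> and \<open>dl P p q\<close> is \<open>q \<delta>_p\<close> (maps written on the right).\<close>

record 'p projalg =
  pcar :: "'p set"
  th :: "'p \<Rightarrow> 'p \<Rightarrow> 'p"
  dl :: "'p \<Rightarrow> 'p \<Rightarrow> 'p"

definition projection_algebra :: "'p projalg \<Rightarrow> bool" where
  "projection_algebra P \<longleftrightarrow>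
    (\<forall>p\<in>pcar P. \<forall>x\<in>pcar P. th P p x \<in> pcar P \<and> dl P p x \<in> pcar P) \<and>
    (\<forall>p\<in>pcar P. th P p p = p \<and> dl P p p = p) \<and>
    (\<forall>p\<in>pcar P. \<forall>q\<in>pcar P.
       th P (th P p q) p = th P p q \<and> dl P (dl P p q) p = dl P p q) \<and>
    (\<forall>p\<in>pcar P. \<forall>q\<in>pcar P. \<forall>x\<in>pcar P.
       th P (th P p q) (th P q x) = th P p (th P q x) \<and>
       dl P (dl P p q) (dl P q x) = dl P p (dl P q x)) \<and>
    (\<forall>p\<in>pcar P. \<forall>x\<in>pcar P.
       dl P p (th P p x) = th P p x \<and> th P p (dl P p x) = dl P p x) \<and>
    (\<forall>p\<in>pcar P. \<forall>q\<in>pcar P. \<forall>x\<in>pcar P.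
       th P p (th P (dl P q p) x) = th P p (th P q x) \<and>
       dl P p (dl P (th P q p) x) = dl P p (dl P q x))"

definition pa_le :: "'p projalg \<Rightarrow> 'p \<Rightarrow> 'p \<Rightarrow> bool" where
  "pa_le P p q \<longleftrightarrow> p = th P q p"

definition pa_F :: "'p projalg \<Rightarrow> 'p \<Rightarrow> 'p \<Rightarrow> bool" where
  "pa_F P p q \<longleftrightarrow> p = dl P p q \<and> q = th P q p"

definition projalg_morphism :: "'p projalg \<Rightarrow> 'q projalg \<Rightarrow> ('p \<Rightarrow> 'q) \<Rightarrow> bool" where
  "projalg_morphism P P' f \<longleftrightarrow>
     (\<forall>p\<in>pcar P. f p \<in> pcar P') \<and>
     (\<forall>p\<in>pcar P. \<forall>q\<in>pcar P. f (th P p q) = th P' (f p) (f q) \<and> f (dl P p q) = dl P' (f p) (f q))"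

text \<open>A small category given by its set of morphisms; objects are identities.
  \<open>ccomp C a b\<close> is \<open>a \<circ> b\<close> (first \<open>a\<close>, then \<open>b\<close>), meaningful when \<open>ccod C a = cdom C b\<close>.\<close>

record 'm bicat =
  mor :: "'m set"
  cdom :: "'m \<Rightarrow> 'm"
  ccod :: "'m \<Rightarrow> 'm"
  ccomp :: "'m \<Rightarrow> 'm \<Rightarrow> 'm"
  lle :: "'m \<Rightarrow> 'm \<Rightarrow> bool"
  rle :: "'m \<Rightarrow> 'm \<Rightarrow> bool"

definition obj :: "('m, 'z) bicat_scheme \<Rightarrow> 'm set" where
  "obj C = {a \<in> mor C. cdom C a = a}"

definition category :: "('m, 'z) bicat_scheme \<Rightarrow> bool" where
  "category C \<longleftrightarrow>
    (\<forall>a\<in>mor C. cdom C a \<in> mor C \<and> ccod C a \<in> mor C \<and>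
        cdom C (cdom C a) = cdom C a \<and> ccod C (cdom C a) = cdom C a \<and>
        cdom C (ccod C a) = ccod C a \<and> ccod C (ccod C a) = ccod C a \<and>
        ccomp C (cdom C a) a = a \<and> ccomp C a (ccod C a) = a) \<and>
    (\<forall>a\<in>mor C. \<forall>b\<in>mor C. ccod C a = cdom C b \<longrightarrow>
        ccomp C a b \<in> mor C \<and> cdom C (ccomp C a b) = cdom C a \<and> ccod C (ccomp C a b) = ccod C b) \<and>
    (\<forall>a\<in>mor C. \<forall>b\<in>mor C. \<forall>c\<in>mor C. ccod C a = cdom C b \<longrightarrow> ccod C b = cdom C c \<longrightarrow>
        ccomp C (ccomp C a b) c = ccomp C a (ccomp C b c))"

definition partial_order_on' :: "'m set \<Rightarrow> ('m \<Rightarrow> 'm \<Rightarrow> bool) \<Rightarrow> bool" where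
  "partial_order_on' A le \<longleftrightarrow>
    (\<forall>a b. le a b \<longrightarrow> a \<in> A \<and> b \<in> A) \<and> (\<forall>a\<in>A. le a a) \<and>
    (\<forall>a b. le a b \<longrightarrow> le b a \<longrightarrow> a = b) \<and> (\<forall>a b c. le a b \<longrightarrow> le b c \<longrightarrow> le a c)"

definition left_ordered :: "('m, 'z) bicat_scheme \<Rightarrow> ('m \<Rightarrow> 'm \<Rightarrow> bool) \<Rightarrow> bool" where
  "left_ordered C le \<longleftrightarrow> category C \<and> partial_order_on' (mor C) le \<and>
    (\<forall>a b. le a b \<longrightarrow> le (cdom C a) (cdom C b) \<and> le (ccod C a) (ccod C b)) \<and>
    (\<forall>a b c c'. le a b \<longrightarrow> le c c' \<longrightarrow> ccod C a = cdom C c \<longrightarrow> ccod C b = cdom C c' \<longrightarrow>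
        le (ccomp C a c) (ccomp C b c')) \<and>
    (\<forall>a\<in>mor C. \<forall>p\<in>obj C. le p (cdom C a) \<longrightarrow> (\<exists>!u. u \<in> mor C \<and> le u a \<and> cdom C u = p))"

definition right_ordered :: "('m, 'z) bicat_scheme \<Rightarrow> ('m \<Rightarrow> 'm \<Rightarrow> bool) \<Rightarrow> bool" where
  "right_ordered C le \<longleftrightarrow> category C \<and> partial_order_on' (mor C) le \<and>
    (\<forall>a b. le a b \<longrightarrow> le (cdom C a) (cdom C b) \<and> le (ccod C a) (ccod C b)) \<and>
    (\<forall>a b c c'. le a b \<longrightarrow> le c c' \<longrightarrow> ccod C a = cdom C c \<longrightarrow> ccod C b = cdom C c' \<longrightarrow>
        le (ccomp C a c) (ccomp C b c')) \<and>
    (\<forall>a\<in>mor C. \<forall>q\<in>obj C. le q (ccod C a) \<longrightarrow> (\<exists>!v. v \<in> mor C \<and> le v a \<and> ccod C v = q))"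

definition biordered :: "('m, 'z) bicat_scheme \<Rightarrow> bool" where
  "biordered C \<longleftrightarrow> left_ordered C (lle C) \<and> right_ordered C (rle C) \<and>
     (\<forall>p\<in>obj C. \<forall>q\<in>obj C. lle C p q \<longleftrightarrow> rle C p q)"

definition lrest :: "('m, 'z) bicat_scheme \<Rightarrow> 'm \<Rightarrow> 'm \<Rightarrow> 'm" where
  "lrest C p a = (THE u. u \<in> mor C \<and> lle C u a \<and> cdom C u = p)"

definition rrest :: "('m, 'z) bicat_scheme \<Rightarrow> 'm \<Rightarrow> 'm \<Rightarrow> 'm" where
  "rrest C a q = (THE v. v \<in> mor C \<and> rle C v a \<and> ccod C v = q)"

definition biordered_functor :: "('m, 'z) bicat_scheme \<Rightarrow> ('n, 'y) bicat_scheme \<Rightarrow> ('m \<Rightarrow> 'n) \<Rightarrow> bool" where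
  "biordered_functor C C' f \<longleftrightarrow>
    (\<forall>a\<in>mor C. f a \<in> mor C' \<and> f (cdom C a) = cdom C' (f a) \<and> f (ccod C a) = ccod C' (f a)) \<and>
    (\<forall>a\<in>mor C. \<forall>b\<in>mor C. ccod C a = cdom C b \<longrightarrow> f (ccomp C a b) = ccomp C' (f a) (f b)) \<and>
    (\<forall>a b. lle C a b \<longrightarrow> lle C' (f a) (f b)) \<and>
    (\<forall>a b. rle C a b \<longrightarrow> rle C' (f a) (f b))"

definition weak_projection_category :: "'m projalg \<Rightarrow> ('m, 'z) bicat_scheme \<Rightarrow> bool" where
  "weak_projection_category P C \<longleftrightarrow> biordered C \<and> projection_algebra P \<and> pcar P = obj C \<and>
     (\<forall>p\<in>pcar P. \<forall>q\<in>pcar P. (pa_le P p q \<longleftrightarrow> lle C p q) \<and> (pa_le P p q \<longleftrightarrow> rle C p q))"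

text \<open>\<open>Theta P C a x = x \<Theta>_a = x \<theta>_{d(a)} \<vartheta>_a\<close>, \<open>Delta P C a x = x \<Delta>_a = x \<delta>_{r(a)} \<vartheta>'_a\<close>.\<close>

definition Theta :: "'m projalg \<Rightarrow> ('m, 'z) bicat_scheme \<Rightarrow> 'm \<Rightarrow> 'm \<Rightarrow> 'm" where
  "Theta P C a x = ccod C (lrest C (th P (cdom C a) x) a)"

definition Delta :: "'m projalg \<Rightarrow> ('m, 'z) bicat_scheme \<Rightarrow> 'm \<Rightarrow> 'm \<Rightarrow> 'm" where
  "Delta P C a x = cdom C (rrest C a (dl P (ccod C a) x))"

definition projection_category :: "'m projalg \<Rightarrow> ('m, 'z) bicat_scheme \<Rightarrow> bool" where
  "projection_category P C \<longleftrightarrow> weak_projection_category P C \<and>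
    (\<forall>a\<in>mor C. \<forall>q\<in>pcar P. pa_le P q (ccod C a) \<longrightarrow>
        (\<forall>x\<in>pcar P. Theta P C (rrest C a q) x = th P q (Theta P C a x))) \<and>
    (\<forall>a\<in>mor C. \<forall>p\<in>pcar P. pa_le P p (cdom C a) \<longrightarrow>
        (\<forall>x\<in>pcar P. Delta P C (lrest C p a) x = dl P p (Delta P C a x)))"

text \<open>The congruence generated
  by \<open>(p,p) \<approx> (p)\<close> identifies a path with the path obtained by removing adjacent repetitions,
  and each class has a unique reduced representative (\<open>remdups_adj\<close>). We represent the
  chain \<open>[p\<^sub>1,\<dots>,p\<^sub>k]\<close> by this reduced representative \<open>chn [p\<^sub>1,\<dots>,p\<^sub>k]\<close>;
  the object \<open>p\<close> of \<open>\<C>(P)\<close> is \<open>[p]\<close>.\<close>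

definition is_path :: "'p projalg \<Rightarrow> 'p list \<Rightarrow> bool" where
  "is_path P ps \<longleftrightarrow> ps \<noteq> [] \<and> set ps \<subseteq> pcar P \<and> successively (pa_F P) ps"

definition chn :: "'p list \<Rightarrow> 'p list" where
  "chn ps = remdups_adj ps"

fun lpath :: "'p projalg \<Rightarrow> 'p \<Rightarrow> 'p list \<Rightarrow> 'p list" where
  "lpath P q [] = []"
| "lpath P q (p # ps) = th P p q # lpath P (th P p q) ps"

fun lpathD :: "'p projalg \<Rightarrow> 'p \<Rightarrow> 'p list \<Rightarrow> 'p list" where
  "lpathD P r [] = []"
| "lpathD P r (p # ps) = dl P p r # lpathD P (dl P p r) ps"

text \<open>\<open>rpath P r ps\<close>: \<open>r\<^sub>k = r \<delta>_{p\<^sub>k}\<close> (\<open>= r\<close> when \<open>r \<le> p\<^sub>k\<close>), \<open>r\<^sub>i = r\<^sub>i\<^sub>+\<^sub>1 \<delta>_{p\<^sub>i}\<close>.\<close>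

definition rpath :: "'p projalg \<Rightarrow> 'p \<Rightarrow> 'p list \<Rightarrow> 'p list" where
  "rpath P r ps = rev (lpathD P r (rev ps))"

definition chain_cat :: "'p projalg \<Rightarrow> 'p list bicat" where
  "chain_cat P =
    \<lparr> mor = {ps. is_path P ps \<and> chn ps = ps},
      cdom = (\<lambda>ps. [hd ps]),
      ccod = (\<lambda>ps. [last ps]),
      ccomp = (\<lambda>ps qs. chn (ps @ tl qs)),
      lle = (\<lambda>ps qs. is_path P ps \<and> chn ps = ps \<and> is_path P qs \<and> chn qs = qs \<and>
                     pa_le P (hd ps) (hd qs) \<and> ps = chn (lpath P (hd ps) qs)),
      rle = (\<lambda>ps qs. is_path P ps \<and> chn ps = ps \<and> is_path P qs \<and> chn qs = qs \<and>
                     pa_le P (last ps) (last qs) \<and> ps = chn (rpath P (last ps) qs)) \<rparr>"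

definition evaluation_map :: "'m projalg \<Rightarrow> ('m, 'z) bicat_scheme \<Rightarrow> ('m list \<Rightarrow> 'm) \<Rightarrow> bool" where
  "evaluation_map P C \<epsilon> \<longleftrightarrow> biordered_functor (chain_cat P) C \<epsilon> \<and> (\<forall>p\<in>pcar P. \<epsilon> [p] = p)"

definition lam :: "'m projalg \<Rightarrow> ('m, 'z) bicat_scheme \<Rightarrow> ('m list \<Rightarrow> 'm) \<Rightarrow> 'm \<Rightarrow> 'm \<Rightarrow> 'm \<Rightarrow> 'm" where
  "lam P C \<epsilon> p b s =
    (let q = cdom C b; e = dl P p (Delta P C b s); e1 = dl P (th P q p) (Delta P C b s);
         f = th P s (Theta P C b p); f1 = dl P (Theta P C b p) s
     in ccomp C (ccomp C (\<epsilon> (chn [e, e1])) (rrest C (lrest C (th P q p) b) f1)) (\<epsilon> (chn [f1, f])))"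

definition rho :: "'m projalg \<Rightarrow> ('m, 'z) bicat_scheme \<Rightarrow> ('m list \<Rightarrow> 'm) \<Rightarrow> 'm \<Rightarrow> 'm \<Rightarrow> 'm \<Rightarrow> 'm" where
  "rho P C \<epsilon> p b s =
    (let r = ccod C b; e = dl P p (Delta P C b s); e2 = th P (Delta P C b s) p;
         f = th P s (Theta P C b p); f2 = th P (dl P r s) (Theta P C b p)
     in ccomp C (ccomp C (\<epsilon> (chn [e, e2])) (lrest C e2 (rrest C b (dl P r s)))) (\<epsilon> (chn [f2, f])))"

definition chained_projection_category ::
  "'m projalg \<Rightarrow> ('m, 'z) bicat_scheme \<Rightarrow> ('m list \<Rightarrow> 'm) \<Rightarrow> bool" where
  "chained_projection_category P C \<epsilon> \<longleftrightarrow> projection_category P C \<and> evaluation_map P C \<epsilon> \<and>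
     (\<forall>b\<in>mor C. \<forall>p\<in>pcar P. \<forall>s\<in>pcar P. lam P C \<epsilon> p b s = rho P C \<epsilon> p b s)"

definition chained_projection_functor ::
  "'m projalg \<Rightarrow> ('m, 'z) bicat_scheme \<Rightarrow> ('m list \<Rightarrow> 'm) \<Rightarrow>
   'n projalg \<Rightarrow> ('n, 'y) bicat_scheme \<Rightarrow> ('n list \<Rightarrow> 'n) \<Rightarrow> ('m \<Rightarrow> 'n) \<Rightarrow> bool" where
  "chained_projection_functor P C \<epsilon> P' C' \<epsilon>' \<phi> \<longleftrightarrow>
     biordered_functor C C' \<phi> \<and> projalg_morphism P P' \<phi> \<and>
     (\<forall>ps. is_path P ps \<longrightarrow> \<phi> (\<epsilon> (chn ps)) = \<epsilon>' (chn (map \<phi> ps)))"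

definition drc_proj :: "'a set \<Rightarrow> ('a \<Rightarrow> 'a \<Rightarrow> 'a) \<Rightarrow> ('a \<Rightarrow> 'a) \<Rightarrow> ('a \<Rightarrow> 'a) \<Rightarrow> 'a projalg" where
  "drc_proj S m D R = \<lparr> pcar = {D a | a. a \<in> S}, th = (\<lambda>p q. R (m q p)), dl = (\<lambda>p q. D (m p q)) \<rparr>"

definition proj_le :: "('a \<Rightarrow> 'a \<Rightarrow> 'a) \<Rightarrow> 'a \<Rightarrow> 'a \<Rightarrow> bool" where
  "proj_le m p q \<longleftrightarrow> p = m p q \<and> p = m q p"

definition drc_cat :: "'a set \<Rightarrow> ('a \<Rightarrow> 'a \<Rightarrow> 'a) \<Rightarrow> ('a \<Rightarrow> 'a) \<Rightarrow> ('a \<Rightarrow> 'a) \<Rightarrow> 'a bicat" where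
  "drc_cat S m D R =
    \<lparr> mor = S, cdom = D, ccod = R, ccomp = m,
      lle = (\<lambda>a b. a \<in> S \<and> b \<in> S \<and> proj_le m (D a) (D b) \<and> a = m (D a) b),
      rle = (\<lambda>a b. a \<in> S \<and> b \<in> S \<and> proj_le m (R a) (R b) \<and> a = m b (R a)) \<rparr>"

definition drc_eps :: "('a \<Rightarrow> 'a \<Rightarrow> 'a) \<Rightarrow> 'a list \<Rightarrow> 'a" where
  "drc_eps m ps = foldl m (hd ps) (tl ps)"

end

theory Submission
  imports Defs
begin

(* In C(S) all the data of a projection category are products: the restrictions of a are p a
   and a q, so Theta_a and Delta_a become x |-> R (x a) and x |-> D (a x), and epsilon(S)
   multiplies the entries of a chain, the product of an F-path having D equal to its first and R
   equal to its last entry. Each axiom of a chained projection category thus turns into an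
   identity in S, obtained from the DRC axioms via D (a b) <= D a, R (a b) <= R b and, for a
   projection p, a R (a p) = a p and D (p a) a = p a. In particular lambda(p,b,s) and
   rho(p,b,s) both collapse to the product p b s, which is (C2). A DRC-morphism preserves
   products, D and R, hence all of this structure. *)

fun mprod :: "('a \<Rightarrow> 'a \<Rightarrow> 'a) \<Rightarrow> 'a list \<Rightarrow> 'a" where
  "mprod m [] = undefined"
| "mprod m [x] = x"
| "mprod m (x # y # xs) = m x (mprod m (y # xs))"

lemma mprod_Cons: "xs \<noteq> [] \<Longrightarrow> mprod m (x # xs) = m x (mprod m xs)"
  by (cases xs) simp_all

lemma mprod_closed:
  assumes "\<And>a b. a \<in> S \<Longrightarrow> b \<in> S \<Longrightarrow> m a b \<in> S"
  shows "xs \<noteq> [] \<Longrightarrow> set xs \<subseteq> S \<Longrightarrow> mprod m xs \<in> S"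
  by (induction xs rule: induct_list012) (simp_all add: assms)

lemma mprod_map:
  assumes closed: "\<And>a b. a \<in> S \<Longrightarrow> b \<in> S \<Longrightarrow> m a b \<in> S"
    and hom: "\<And>a b. a \<in> S \<Longrightarrow> b \<in> S \<Longrightarrow> \<phi> (m a b) = m' (\<phi> a) (\<phi> b)"
  shows "xs \<noteq> [] \<Longrightarrow> set xs \<subseteq> S \<Longrightarrow> \<phi> (mprod m xs) = mprod m' (map \<phi> xs)"
  by (induction xs rule: induct_list012) (simp_all add: hom mprod_closed[OF closed])

lemma proj_le_antisym: "proj_le m p q \<Longrightarrow> proj_le m q p \<Longrightarrow> p = q"
  unfolding proj_le_def by metis

lemma drc_dual:
  assumes "drc S m D R"
  shows "drc S (\<lambda>a b. m b a) R D"
proof -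
  have closed: "\<And>a b. a \<in> S \<Longrightarrow> b \<in> S \<Longrightarrow> m a b \<in> S"
    and assoc: "\<And>a b c. a \<in> S \<Longrightarrow> b \<in> S \<Longrightarrow> c \<in> S \<Longrightarrow> m (m a b) c = m a (m b c)"
    and sandwich: "\<And>a b. a \<in> S \<Longrightarrow> b \<in> S \<Longrightarrow> D (m a b) = m (m (D a) (D (m a b))) (D a) \<and>
                    R (m a b) = m (m (R b) (R (m a b))) (R b)"
    and DR_closed: "\<And>a. a \<in> S \<Longrightarrow> D a \<in> S \<and> R a \<in> S"
    using assms unfolding drc_def by blast+
  have "m (R a) (m (R (m b a)) (R a)) = R (m b a)" "m (D b) (m (D (m b a)) (D b)) = D (m b a)"
    if "a \<in> S" "b \<in> S" for a b
    using sandwich[OF that(2,1)] assoc closed DR_closed that by metis+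
  with assms show ?thesis
    unfolding drc_def using assoc closed by auto
qed

locale drc_semigroup =
  fixes S :: "'a set" and m :: "'a \<Rightarrow> 'a \<Rightarrow> 'a" (infixl "\<cdot>" 70) and D R :: "'a \<Rightarrow> 'a"
  assumes drc: "drc S m D R"
begin

lemma mult_closed [simp]: "a \<in> S \<Longrightarrow> b \<in> S \<Longrightarrow> a \<cdot> b \<in> S"
  and D_closed [simp]: "a \<in> S \<Longrightarrow> D a \<in> S"
  and R_closed [simp]: "a \<in> S \<Longrightarrow> R a \<in> S"
  and mult_assoc [simp]: "a \<in> S \<Longrightarrow> b \<in> S \<Longrightarrow> c \<in> S \<Longrightarrow> a \<cdot> b \<cdot> c = a \<cdot> (b \<cdot> c)"
  and D_mult_self [simp]: "a \<in> S \<Longrightarrow> D a \<cdot> a = a"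
  and mult_R_self [simp]: "a \<in> S \<Longrightarrow> a \<cdot> R a = a"
  and D_mult_D [simp]: "a \<in> S \<Longrightarrow> b \<in> S \<Longrightarrow> D (a \<cdot> D b) = D (a \<cdot> b)"
  and R_R_mult [simp]: "a \<in> S \<Longrightarrow> b \<in> S \<Longrightarrow> R (R a \<cdot> b) = R (a \<cdot> b)"
  and D_sandwich: "a \<in> S \<Longrightarrow> b \<in> S \<Longrightarrow> D (a \<cdot> b) = D a \<cdot> D (a \<cdot> b) \<cdot> D a"
  and R_D [simp]: "a \<in> S \<Longrightarrow> R (D a) = D a"
  and D_R [simp]: "a \<in> S \<Longrightarrow> D (R a) = R a"
  using drc unfolding drc_def by auto

text \<open>The DRC axioms are invariant under reversing the multiplication and swapping \<open>D\<close> with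
  \<open>R\<close>; the mirror image of a lemma is obtained by instantiating it with \<open>dual\<close>.\<close>

lemma dual: "drc_semigroup S (\<lambda>a b. b \<cdot> a) R D"
  using drc by (rule drc_semigroup.intro[OF drc_dual])

lemma D_D [simp]: "a \<in> S \<Longrightarrow> D (D a) = D a"
  by (metis D_R R_D D_closed)

lemma D_idem [simp]: "a \<in> S \<Longrightarrow> D a \<cdot> D a = D a"
  using D_mult_self[of "D a"] by simp

lemma D_mult_le:
  assumes "a \<in> S" "b \<in> S"
  shows "D (a \<cdot> b) \<cdot> D a = D (a \<cdot> b)" and "D a \<cdot> D (a \<cdot> b) = D (a \<cdot> b)"
  using D_sandwich[OF assms] assms by (metis D_closed D_idem mult_assoc mult_closed)+

lemmas R_mult_le = drc_semigroup.D_mult_le[OF dual]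

lemma D_mult_proj_le: "a \<in> S \<Longrightarrow> b \<in> S \<Longrightarrow> proj_le m (D (a \<cdot> b)) (D a)"
  and R_mult_proj_le: "a \<in> S \<Longrightarrow> b \<in> S \<Longrightarrow> proj_le m (R (a \<cdot> b)) (R b)"
  unfolding proj_le_def using D_mult_le R_mult_le by simp_all

lemma D_mult_self_mult [simp]: "a \<in> S \<Longrightarrow> b \<in> S \<Longrightarrow> D a \<cdot> (a \<cdot> b) = a \<cdot> b"
  using D_mult_self[of a] mult_assoc[of "D a" a b] by simp

lemma mult_R_self_mult [simp]: "a \<in> S \<Longrightarrow> b \<in> S \<Longrightarrow> a \<cdot> (R a \<cdot> b) = a \<cdot> b"
  using mult_R_self[of a] mult_assoc[of a "R a" b] by simp

lemma mult_R_mult_D: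
  assumes "a \<in> S" "b \<in> S"
  shows "a \<cdot> R (a \<cdot> D b) = a \<cdot> D b"
proof -
  have "a \<cdot> R (a \<cdot> D b) = a \<cdot> (D b \<cdot> R (a \<cdot> D b))"
    using R_mult_le(1)[of "D b" a] assms by simp
  also have "\<dots> = a \<cdot> D b \<cdot> R (a \<cdot> D b)"
    using assms by (simp del: mult_R_self)
  also have "\<dots> = a \<cdot> D b"
    using assms by (intro mult_R_self) simp
  finally show ?thesis .
qed

lemmas D_R_mult_mult = drc_semigroup.mult_R_mult_D[OF dual]

lemma D_mult_eq_D:
  assumes "a \<in> S" "b \<in> S" "D (R a \<cdot> b) = R a"
  shows "D (a \<cdot> b) = D a"
proof -
  have "D a = D (a \<cdot> D (R a \<cdot> b))"
    using assms by simp
  also have "\<dots> = D (a \<cdot> b)"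
    using assms(1,2) by simp
  finally show ?thesis by simp
qed

lemmas R_mult_eq_R = drc_semigroup.D_mult_eq_D[OF dual]

lemma proj_le_trans:
  assumes "p \<in> S" "q \<in> S" "r \<in> S" "proj_le m p q" "proj_le m q r"
  shows "proj_le m p r"
  using assms unfolding proj_le_def by (metis mult_assoc)

definition Proj :: "'a set" where
  "Proj = {D a | a. a \<in> S}"

lemma Proj_iff: "p \<in> Proj \<longleftrightarrow> p \<in> S \<and> D p = p"
  unfolding Proj_def by force

lemma Proj_S [simp]: "p \<in> Proj \<Longrightarrow> p \<in> S"
  and Proj_D [simp]: "p \<in> Proj \<Longrightarrow> D p = p"
  and D_in_Proj [simp]: "a \<in> S \<Longrightarrow> D a \<in> Proj"
  and R_in_Proj [simp]: "a \<in> S \<Longrightarrow> R a \<in> Proj"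
  by (simp_all add: Proj_iff)

lemma Proj_R [simp]: "p \<in> Proj \<Longrightarrow> R p = p"
  using R_D[of p] by simp

lemma Proj_idem [simp]: "p \<in> Proj \<Longrightarrow> p \<cdot> p = p"
  and Proj_idem_mult [simp]: "p \<in> Proj \<Longrightarrow> a \<in> S \<Longrightarrow> p \<cdot> (p \<cdot> a) = p \<cdot> a"
  using D_idem[of p] D_mult_self_mult[of p a] by simp_all

lemma D_Proj_mult_le:
  assumes "p \<in> Proj" "a \<in> S"
  shows "D (p \<cdot> a) \<cdot> p = D (p \<cdot> a)" "p \<cdot> D (p \<cdot> a) = D (p \<cdot> a)"
  using D_mult_le[of p a] assms by simp_all

lemma R_mult_Proj_le:
  assumes "p \<in> Proj" "a \<in> S"
  shows "p \<cdot> R (a \<cdot> p) = R (a \<cdot> p)" "R (a \<cdot> p) \<cdot> p = R (a \<cdot> p)"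
  using R_mult_le[of p a] assms by simp_all

lemma mult_R_mult_Proj: "p \<in> Proj \<Longrightarrow> a \<in> S \<Longrightarrow> a \<cdot> R (a \<cdot> p) = a \<cdot> p"
  using mult_R_mult_D[of a p] by simp

lemma mult_R_mult_Proj_assoc:
  "p \<in> Proj \<Longrightarrow> a \<in> S \<Longrightarrow> b \<in> S \<Longrightarrow> a \<cdot> (R (a \<cdot> p) \<cdot> b) = a \<cdot> (p \<cdot> b)"
  using mult_assoc[of a "R (a \<cdot> p)" b] by (simp add: mult_R_mult_Proj)

lemma D_Proj_mult_mult: "p \<in> Proj \<Longrightarrow> a \<in> S \<Longrightarrow> D (p \<cdot> a) \<cdot> a = p \<cdot> a"
  using D_R_mult_mult[of a p] by simp

lemma D_Proj_mult_mult_assoc: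
  "p \<in> Proj \<Longrightarrow> a \<in> S \<Longrightarrow> b \<in> S \<Longrightarrow> D (p \<cdot> a) \<cdot> (a \<cdot> b) = p \<cdot> (a \<cdot> b)"
  using mult_assoc[of "D (p \<cdot> a)" a b] by (simp add: D_Proj_mult_mult)

lemma Proj_mult_D_R:
  assumes "p \<in> Proj" "q \<in> Proj"
  shows "D (p \<cdot> q) \<cdot> R (p \<cdot> q) = p \<cdot> q"
proof -
  have "D (p \<cdot> q) \<cdot> R (p \<cdot> q) = D (p \<cdot> q) \<cdot> (p \<cdot> R (p \<cdot> q))"
    using D_Proj_mult_le(1)[of p q] assms by (metis D_closed Proj_S R_closed mult_assoc mult_closed)
  also have "\<dots> = p \<cdot> q"
    using mult_R_mult_D[of p q] assms by simp
  finally show ?thesis .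
qed

lemma Proj_le_iff_R:
  assumes "p \<in> Proj" "q \<in> Proj"
  shows "p = R (p \<cdot> q) \<longleftrightarrow> proj_le m p q"
proof
  assume p: "p = R (p \<cdot> q)"
  show "proj_le m p q"
    unfolding proj_le_def using R_mult_Proj_le[of q p] assms by (simp flip: p)
next
  assume "proj_le m p q"
  then show "p = R (p \<cdot> q)"
    unfolding proj_le_def using assms by (metis Proj_R)
qed

section \<open>The projection category of a DRC-semigroup\<close>

abbreviation PA :: "'a projalg" where
  "PA \<equiv> drc_proj S m D R"

abbreviation CC :: "'a bicat" where
  "CC \<equiv> drc_cat S m D R"

lemma PA_simps [simp]: "pcar PA = Proj" "th PA p q = R (q \<cdot> p)" "dl PA p q = D (p \<cdot> q)"
  by (simp_all only: drc_proj_def Proj_def projalg.simps)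

lemma pa_le_PA_iff: "p \<in> Proj \<Longrightarrow> q \<in> Proj \<Longrightarrow> pa_le PA p q \<longleftrightarrow> proj_le m p q"
  unfolding pa_le_def using Proj_le_iff_R by simp

lemma CC_simps [simp]: "mor CC = S" "cdom CC = D" "ccod CC = R" "ccomp CC = m"
  by (simp_all add: drc_cat_def)

lemma obj_CC [simp]: "obj CC = Proj"
  unfolding obj_def set_eq_iff Proj_iff by simp

lemma lle_CC_iff: "lle CC a b \<longleftrightarrow> a \<in> S \<and> b \<in> S \<and> proj_le m (D a) (D b) \<and> a = D a \<cdot> b"
  by (simp add: drc_cat_def)

lemma rle_CC_iff: "rle CC a b \<longleftrightarrow> a \<in> S \<and> b \<in> S \<and> proj_le m (R a) (R b) \<and> a = b \<cdot> R a"
  by (simp add: drc_cat_def)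

lemma D_comp:
  assumes "a \<in> S" "b \<in> S" "R a = D b"
  shows "D (a \<cdot> b) = D a"
  using assms by (intro D_mult_eq_D) simp_all

lemma R_comp:
  assumes "a \<in> S" "b \<in> S" "R a = D b"
  shows "R (a \<cdot> b) = R b"
  using assms by (intro R_mult_eq_R) (simp_all flip: assms(3))

lemma category_CC: "category CC"
  unfolding category_def CC_simps by (simp add: D_comp R_comp)

lemma lle_CC_dom_iff:
  assumes "a \<in> S" "p \<in> Proj" "proj_le m p (D a)"
  shows "lle CC u a \<and> D u = p \<longleftrightarrow> u = p \<cdot> a"
proof -
  have "D (p \<cdot> a) = p"
    using D_mult_D[of p a] assms unfolding proj_le_def by simp
  show ?thesis
  proof
    assume "lle CC u a \<and> D u = p"
    then show "u = p \<cdot> a"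
      unfolding lle_CC_iff by metis
  next
    assume "u = p \<cdot> a"
    then show "lle CC u a \<and> D u = p"
      unfolding lle_CC_iff using \<open>D (p \<cdot> a) = p\<close> assms by simp
  qed
qed

lemma rle_CC_cod_iff:
  assumes "a \<in> S" "q \<in> Proj" "proj_le m q (R a)"
  shows "rle CC u a \<and> R u = q \<longleftrightarrow> u = a \<cdot> q"
proof -
  have "R (a \<cdot> q) = q"
    using R_R_mult[of a q] assms unfolding proj_le_def by simp
  show ?thesis
  proof
    assume "rle CC u a \<and> R u = q"
    then show "u = a \<cdot> q"
      unfolding rle_CC_iff by metis
  next
    assume "u = a \<cdot> q"
    then show "rle CC u a \<and> R u = q"
      unfolding rle_CC_iff using \<open>R (a \<cdot> q) = q\<close> assms by simp
  qed
qed

lemma lrest_CC: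
  assumes "a \<in> S" "p \<in> Proj" "proj_le m p (D a)"
  shows "lrest CC p a = p \<cdot> a"
  unfolding lrest_def CC_simps
  using lle_CC_dom_iff[OF assms] assms by (intro the_equality) (auto simp: lle_CC_iff)

lemma rrest_CC:
  assumes "a \<in> S" "q \<in> Proj" "proj_le m q (R a)"
  shows "rrest CC a q = a \<cdot> q"
  unfolding rrest_def CC_simps
  using rle_CC_cod_iff[OF assms] assms by (intro the_equality) (auto simp: rle_CC_iff)

lemma lle_Proj_iff: "p \<in> Proj \<Longrightarrow> q \<in> Proj \<Longrightarrow> lle CC p q \<longleftrightarrow> proj_le m p q"
  and rle_Proj_iff: "p \<in> Proj \<Longrightarrow> q \<in> Proj \<Longrightarrow> rle CC p q \<longleftrightarrow> proj_le m p q"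
  unfolding lle_CC_iff rle_CC_iff proj_le_def by auto

lemma partial_order_lle: "partial_order_on' S (lle CC)"
  unfolding partial_order_on'_def
proof (intro conjI)
  show "\<forall>a b. lle CC a b \<longrightarrow> a \<in> S \<and> b \<in> S"
    by (simp add: lle_CC_iff)
  show "\<forall>a\<in>S. lle CC a a"
    by (simp add: lle_CC_iff proj_le_def)
  show "\<forall>a b. lle CC a b \<longrightarrow> lle CC b a \<longrightarrow> a = b"
    unfolding lle_CC_iff by (metis proj_le_antisym D_mult_self)
  show "\<forall>a b c. lle CC a b \<longrightarrow> lle CC b c \<longrightarrow> lle CC a c"
  proof (intro allI impI)
    fix a b c
    assume ab: "lle CC a b" and bc: "lle CC b c"
    then have "D a \<cdot> c = a"
      unfolding lle_CC_iff proj_le_def by (metis D_closed mult_assoc)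
    with ab bc show "lle CC a c"
      unfolding lle_CC_iff using proj_le_trans[of "D a" "D b" "D c"] by simp
  qed
qed

lemma partial_order_rle: "partial_order_on' S (rle CC)"
  unfolding partial_order_on'_def
proof (intro conjI)
  show "\<forall>a b. rle CC a b \<longrightarrow> a \<in> S \<and> b \<in> S"
    by (simp add: rle_CC_iff)
  show "\<forall>a\<in>S. rle CC a a"
    by (simp add: rle_CC_iff proj_le_def)
  show "\<forall>a b. rle CC a b \<longrightarrow> rle CC b a \<longrightarrow> a = b"
    unfolding rle_CC_iff by (metis proj_le_antisym mult_R_self)
  show "\<forall>a b c. rle CC a b \<longrightarrow> rle CC b c \<longrightarrow> rle CC a c"
  proof (intro allI impI)
    fix a b c
    assume ab: "rle CC a b" and bc: "rle CC b c"
    then have "c \<cdot> R a = a"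
      unfolding rle_CC_iff proj_le_def by (metis R_closed mult_assoc)
    with ab bc show "rle CC a c"
      unfolding rle_CC_iff using proj_le_trans[of "R a" "R b" "R c"] by simp
  qed
qed

lemma lle_CC_D_R:
  assumes "lle CC a b"
  shows "lle CC (D a) (D b) \<and> lle CC (R a) (R b)"
proof -
  from assms have a: "a = D a \<cdot> b" and "a \<in> S" "b \<in> S" "proj_le m (D a) (D b)"
    unfolding lle_CC_iff by blast+
  moreover have "proj_le m (R a) (R b)"
    using R_mult_proj_le[of "D a" b] \<open>a \<in> S\<close> \<open>b \<in> S\<close> by (simp flip: a)
  ultimately show ?thesis
    using lle_Proj_iff by simp
qed

lemma rle_CC_D_R:
  assumes "rle CC a b"
  shows "rle CC (D a) (D b) \<and> rle CC (R a) (R b)"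
proof -
  from assms have a: "a = b \<cdot> R a" and "a \<in> S" "b \<in> S" "proj_le m (R a) (R b)"
    unfolding rle_CC_iff by blast+
  moreover have "proj_le m (D a) (D b)"
    using D_mult_proj_le[of b "R a"] \<open>a \<in> S\<close> \<open>b \<in> S\<close> by (simp flip: a)
  ultimately show ?thesis
    using rle_Proj_iff by simp
qed

lemma lle_CC_comp:
  assumes ab: "lle CC a b" and cd: "lle CC c d" and "R a = D c" "R b = D d"
  shows "lle CC (a \<cdot> c) (b \<cdot> d)"
proof -
  from ab cd have S: "a \<in> S" "b \<in> S" "c \<in> S" "d \<in> S"
    by (simp_all add: lle_CC_iff)
  have "a \<cdot> c = a \<cdot> (D c \<cdot> d)"
    using cd unfolding lle_CC_iff by metis
  also have "\<dots> = D a \<cdot> b \<cdot> d"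
    using ab S unfolding lle_CC_iff by (simp flip: \<open>R a = D c\<close>)
  finally have "D a \<cdot> (b \<cdot> d) = a \<cdot> c"
    using S by simp
  moreover have "proj_le m (D a) (D b)"
    using ab by (simp add: lle_CC_iff)
  moreover have "D (a \<cdot> c) = D a" "D (b \<cdot> d) = D b"
    using S assms(3,4) by (simp_all add: D_comp)
  ultimately show ?thesis
    unfolding lle_CC_iff using S by simp
qed

lemma rle_CC_comp:
  assumes ab: "rle CC a b" and cd: "rle CC c d" and "R a = D c" "R b = D d"
  shows "rle CC (a \<cdot> c) (b \<cdot> d)"
proof -
  from ab cd have S: "a \<in> S" "b \<in> S" "c \<in> S" "d \<in> S"
    by (simp_all add: rle_CC_iff)
  have "a \<cdot> c = b \<cdot> R a \<cdot> c"
    using ab unfolding rle_CC_iff by metis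
  also have "\<dots> = b \<cdot> (d \<cdot> R c)"
    using cd S unfolding rle_CC_iff by (simp add: \<open>R a = D c\<close>)
  finally have "b \<cdot> (d \<cdot> R c) = a \<cdot> c"
    by simp
  moreover have "proj_le m (R c) (R d)"
    using cd by (simp add: rle_CC_iff)
  moreover have "R (a \<cdot> c) = R c" "R (b \<cdot> d) = R d"
    using S assms(3,4) by (simp_all add: R_comp)
  ultimately show ?thesis
    unfolding rle_CC_iff using S by simp
qed

lemma left_ordered_CC: "left_ordered CC (lle CC)"
proof -
  have "\<exists>!u. u \<in> S \<and> lle CC u a \<and> D u = p"
    if "a \<in> S" "p \<in> Proj" "lle CC p (D a)" for a p
    using lle_CC_dom_iff[of a p] that by (force simp: lle_Proj_iff)
  then show ?thesis
    unfolding left_ordered_def CC_simps obj_CC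
    using category_CC partial_order_lle lle_CC_D_R lle_CC_comp by blast
qed

lemma right_ordered_CC: "right_ordered CC (rle CC)"
proof -
  have "\<exists>!u. u \<in> S \<and> rle CC u a \<and> R u = q"
    if "a \<in> S" "q \<in> Proj" "rle CC q (R a)" for a q
    using rle_CC_cod_iff[of a q] that by (force simp: rle_Proj_iff)
  then show ?thesis
    unfolding right_ordered_def CC_simps obj_CC
    using category_CC partial_order_rle rle_CC_D_R rle_CC_comp by blast
qed

lemma biordered_CC: "biordered CC"
  unfolding biordered_def using left_ordered_CC right_ordered_CC lle_Proj_iff rle_Proj_iff by simp

lemma projection_algebra_PA: "projection_algebra PA"
  unfolding projection_algebra_def PA_simps
proof (intro conjI ballI)
  fix p q x
  assume "p \<in> Proj" "q \<in> Proj" "x \<in> Proj"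
  then show "R (R (x \<cdot> q) \<cdot> R (q \<cdot> p)) = R (R (x \<cdot> q) \<cdot> p)"
    and "D (D (p \<cdot> q) \<cdot> D (q \<cdot> x)) = D (p \<cdot> D (q \<cdot> x))"
    and "R (R (x \<cdot> D (q \<cdot> p)) \<cdot> p) = R (R (x \<cdot> q) \<cdot> p)"
    and "D (p \<cdot> D (R (p \<cdot> q) \<cdot> x)) = D (p \<cdot> D (q \<cdot> x))"
    by (simp_all add: mult_R_mult_Proj mult_R_mult_Proj_assoc D_Proj_mult_mult D_Proj_mult_mult_assoc)
next
  fix p q
  assume "p \<in> Proj" "q \<in> Proj"
  then show "R (p \<cdot> R (q \<cdot> p)) = R (q \<cdot> p)" and "D (D (p \<cdot> q) \<cdot> p) = D (p \<cdot> q)"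
    and "D (q \<cdot> R (p \<cdot> q)) = R (p \<cdot> q)" and "R (D (q \<cdot> p) \<cdot> q) = D (q \<cdot> p)"
    and "R (p \<cdot> q) \<in> Proj" and "D (q \<cdot> p) \<in> Proj"
    by (simp_all add: R_mult_Proj_le D_Proj_mult_le)
next
  fix p
  assume "p \<in> Proj"
  then show "R (p \<cdot> p) = p" and "D (p \<cdot> p) = p"
    by simp_all
qed

lemma weak_projection_category: "weak_projection_category PA CC"
  unfolding weak_projection_category_def
  using biordered_CC projection_algebra_PA pa_le_PA_iff lle_Proj_iff rle_Proj_iff by simp

lemma Theta_CC: "a \<in> S \<Longrightarrow> x \<in> Proj \<Longrightarrow> Theta PA CC a x = R (x \<cdot> a)"
  unfolding Theta_def using R_mult_proj_le[of x "D a"] by (simp add: lrest_CC)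

lemma Delta_CC: "a \<in> S \<Longrightarrow> x \<in> Proj \<Longrightarrow> Delta PA CC a x = D (a \<cdot> x)"
  unfolding Delta_def using D_mult_proj_le[of "R a" x] by (simp add: rrest_CC)

lemma projection_category: "projection_category PA CC"
  unfolding projection_category_def
  using weak_projection_category
  by (simp add: Theta_CC Delta_CC lrest_CC rrest_CC pa_le_PA_iff)

section \<open>The evaluation map and condition (C2)\<close>

lemma mprod_in_S: "xs \<noteq> [] \<Longrightarrow> set xs \<subseteq> S \<Longrightarrow> mprod m xs \<in> S"
  using mprod_closed[of S m] by simp

lemma mprod_append:
  "xs \<noteq> [] \<Longrightarrow> ys \<noteq> [] \<Longrightarrow> set xs \<subseteq> S \<Longrightarrow> set ys \<subseteq> S \<Longrightarrow>
    mprod m (xs @ ys) = mprod m xs \<cdot> mprod m ys"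
  by (induction xs rule: induct_list012) (simp_all add: mprod_Cons mprod_in_S)

lemma drc_eps_eq_mprod: "xs \<noteq> [] \<Longrightarrow> set xs \<subseteq> S \<Longrightarrow> drc_eps m xs = mprod m xs"
proof -
  have "foldl m x ys = mprod m (x # ys)" if "x \<in> S" "set ys \<subseteq> S" for x ys
    using that(2)
  proof (induction ys rule: rev_induct)
    case (snoc y ys)
    then show ?case
      using mprod_append[of "x # ys" "[y]"] that(1) by simp
  qed simp
  then show "xs \<noteq> [] \<Longrightarrow> set xs \<subseteq> S \<Longrightarrow> drc_eps m xs = mprod m xs"
    by (cases xs) (simp_all add: drc_eps_def)
qed

lemma Proj_subset_S: "A \<subseteq> Proj \<Longrightarrow> A \<subseteq> S"
  by auto

lemma mprod_remdups_adj: "set xs \<subseteq> Proj \<Longrightarrow> mprod m (remdups_adj xs) = mprod m xs"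
proof (induction xs rule: remdups_adj.induct)
  case (3 x y xs)
  show ?case
  proof (cases "x = y")
    case True
    have "mprod m (x # xs) = mprod m (x # x # xs)"
      using "3.prems" by (cases xs) (simp_all add: mprod_in_S Proj_subset_S)
    with 3 True show ?thesis
      by simp
  next
    case False
    with 3 show ?thesis
      by (simp add: mprod_Cons)
  qed
qed simp_all

lemma drc_eps_chn: "xs \<noteq> [] \<Longrightarrow> set xs \<subseteq> Proj \<Longrightarrow> drc_eps m (chn xs) = mprod m xs"
  unfolding chn_def by (simp add: drc_eps_eq_mprod mprod_remdups_adj Proj_subset_S)

lemma is_path_PA_Cons_Cons:
  "is_path PA (x # y # ys) \<longleftrightarrow> x \<in> Proj \<and> x = D (x \<cdot> y) \<and> y = R (x \<cdot> y) \<and> is_path PA (y # ys)"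
  by (auto simp: is_path_def pa_F_def)

lemma drc_eps_path: "is_path PA ps \<Longrightarrow> drc_eps m (chn ps) = mprod m ps"
  by (simp add: is_path_def drc_eps_chn)

lemma mprod_path_in_S: "is_path PA ps \<Longrightarrow> mprod m ps \<in> S"
  by (simp add: is_path_def mprod_in_S Proj_subset_S)

lemma D_mprod_path: "is_path PA ps \<Longrightarrow> D (mprod m ps) = hd ps"
proof (induction ps rule: induct_list012)
  case (3 x y ys)
  then have "D (x \<cdot> mprod m (y # ys)) = D (x \<cdot> y)"
    using D_mult_D[of x "mprod m (y # ys)"] mprod_path_in_S
    by (simp add: is_path_PA_Cons_Cons)
  with "3.prems" show ?case
    by (simp add: is_path_PA_Cons_Cons)
qed (simp_all add: is_path_def)

lemma R_mprod_path: "is_path PA ps \<Longrightarrow> R (mprod m ps) = last ps"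
proof (induction ps rule: induct_list012)
  case (3 x y ys)
  then have "R (x \<cdot> mprod m (y # ys)) = R (mprod m (y # ys))"
    using D_mprod_path[of "y # ys"] mprod_path_in_S
    by (intro R_mult_eq_R) (auto simp: is_path_PA_Cons_Cons)
  with 3 show ?case
    by (simp add: is_path_PA_Cons_Cons)
qed (simp_all add: is_path_def)

lemma mprod_path_comp:
  assumes ps: "is_path PA ps" and qs: "is_path PA qs" and "last ps = hd qs"
  shows "mprod m (ps @ tl qs) = mprod m ps \<cdot> mprod m qs"
proof (cases "tl qs = []")
  case True
  with qs \<open>last ps = hd qs\<close> have "qs = [R (mprod m ps)]"
    using R_mprod_path[OF ps] by (cases qs) (simp_all add: is_path_def)
  with True show ?thesis
    using mprod_path_in_S[OF ps] by simp
next
  case False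
  then have "qs = hd qs # tl qs" "set (tl qs) \<subseteq> S"
    using qs by (auto simp: is_path_def dest: list.set_sel(2))
  then have "mprod m qs = R (mprod m ps) \<cdot> mprod m (tl qs)"
    using False R_mprod_path[OF ps] \<open>last ps = hd qs\<close> by (metis mprod_Cons)
  then show ?thesis
    using ps False \<open>set (tl qs) \<subseteq> S\<close> mprod_path_in_S[OF ps]
    by (simp add: mprod_append mprod_in_S is_path_def Proj_subset_S)
qed

lemma lpath_eq_Nil_iff: "lpath P q ps = [] \<longleftrightarrow> ps = []"
  by (cases ps) simp_all

lemma rpath_Nil [simp]: "rpath P r [] = []"
  and rpath_single [simp]: "rpath P r [p] = [dl P p r]"
  and rpath_snoc [simp]: "rpath P r (ps @ [p]) = rpath P (dl P p r) ps @ [dl P p r]"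
  by (simp_all add: rpath_def)

lemma rpath_eq_Nil_iff: "rpath P r ps = [] \<longleftrightarrow> ps = []"
  by (cases ps rule: rev_cases) simp_all

lemma set_lpath_PA: "q \<in> S \<Longrightarrow> set ps \<subseteq> Proj \<Longrightarrow> set (lpath PA q ps) \<subseteq> Proj"
  by (induction ps arbitrary: q) simp_all

lemma set_rpath_PA: "r \<in> S \<Longrightarrow> set ps \<subseteq> Proj \<Longrightarrow> set (rpath PA r ps) \<subseteq> Proj"
  by (induction ps arbitrary: r rule: rev_induct) simp_all

lemma mult_mprod_lpath:
  "a \<in> S \<Longrightarrow> qs \<noteq> [] \<Longrightarrow> set qs \<subseteq> Proj \<Longrightarrow>
    a \<cdot> mprod m (lpath PA (R a) qs) = a \<cdot> mprod m qs"
proof (induction qs arbitrary: a)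
  case (Cons p ps)
  show ?case
  proof (cases "ps = []")
    case False
    with Cons have "a \<cdot> p \<cdot> mprod m (lpath PA (R (a \<cdot> p)) ps) = a \<cdot> p \<cdot> mprod m ps"
      by simp
    with Cons.prems False show ?thesis
      using set_lpath_PA[of "R (a \<cdot> p)" ps]
      by (simp add: mprod_Cons lpath_eq_Nil_iff mprod_in_S Proj_subset_S mult_R_mult_Proj_assoc)
  qed (use Cons.prems in \<open>simp add: mult_R_mult_Proj\<close>)
qed simp

lemma mprod_rpath_mult:
  "a \<in> S \<Longrightarrow> qs \<noteq> [] \<Longrightarrow> set qs \<subseteq> Proj \<Longrightarrow>
    mprod m (rpath PA (D a) qs) \<cdot> a = mprod m qs \<cdot> a"
proof (induction qs arbitrary: a rule: rev_induct)
  case (snoc p ps)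
  show ?case
  proof (cases "ps = []")
    case False
    with snoc have "mprod m (rpath PA (D (p \<cdot> a)) ps) \<cdot> (p \<cdot> a) = mprod m ps \<cdot> (p \<cdot> a)"
      by simp
    with snoc.prems False show ?thesis
      using set_rpath_PA[of "D (p \<cdot> a)" ps]
      by (simp add: mprod_append rpath_eq_Nil_iff mprod_in_S Proj_subset_S D_Proj_mult_mult)
  qed (use snoc.prems in \<open>simp add: D_Proj_mult_mult\<close>)
qed simp

lemma drc_eps_single [simp]: "drc_eps m [x] = x"
  by (simp add: drc_eps_def)

lemma chain_cat_mor_iff: "ps \<in> mor (chain_cat P) \<longleftrightarrow> is_path P ps \<and> chn ps = ps"
  by (simp add: chain_cat_def)

lemma drc_eps_mor:
  "ps \<in> mor (chain_cat PA) \<Longrightarrow> drc_eps m ps = mprod m ps"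
  using drc_eps_path by (metis chain_cat_mor_iff)

lemma drc_eps_lle:
  assumes "lle (chain_cat PA) ps qs"
  shows "lle CC (drc_eps m ps) (drc_eps m qs)"
proof -
  define p where "p = hd ps"
  from assms have ps: "ps \<in> mor (chain_cat PA)" and qs: "qs \<in> mor (chain_cat PA)"
    and "pa_le PA p (hd qs)" and ps_eq: "ps = chn (lpath PA p qs)"
    by (simp_all add: chain_cat_def p_def)
  from ps qs have "is_path PA ps" "is_path PA qs"
    by (simp_all add: chain_cat_mor_iff)
  then have p: "p \<in> Proj" and qs_Proj: "qs \<noteq> []" "set qs \<subseteq> Proj"
    by (auto simp: is_path_def p_def)
  have "mprod m ps = drc_eps m (chn (lpath PA p qs))"
    using drc_eps_mor[OF ps] by (simp flip: ps_eq)
  also have "\<dots> = mprod m (lpath PA p qs)"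
    using p qs_Proj set_lpath_PA[of p qs] by (simp add: drc_eps_chn lpath_eq_Nil_iff)
  finally have "mprod m ps = p \<cdot> mprod m (lpath PA (R p) qs)"
    using D_mprod_path[OF \<open>is_path PA ps\<close>] mprod_path_in_S[OF \<open>is_path PA ps\<close>] p
    by (metis D_mult_self Proj_R p_def)
  also have "\<dots> = p \<cdot> mprod m qs"
    using mult_mprod_lpath[of p qs] p qs_Proj by simp
  finally have mprod_ps: "mprod m ps = p \<cdot> mprod m qs" .
  have "proj_le m p (hd qs)"
    using \<open>pa_le PA p (hd qs)\<close> pa_le_PA_iff[of p "hd qs"] p qs_Proj hd_in_set[of qs] by blast
  then show ?thesis
    unfolding lle_CC_iff drc_eps_mor[OF ps] drc_eps_mor[OF qs]
    using \<open>is_path PA ps\<close> \<open>is_path PA qs\<close> mprod_ps[symmetric]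
    by (simp add: D_mprod_path mprod_path_in_S p_def)
qed

lemma drc_eps_rle:
  assumes "rle (chain_cat PA) ps qs"
  shows "rle CC (drc_eps m ps) (drc_eps m qs)"
proof -
  define r where "r = last ps"
  from assms have ps: "ps \<in> mor (chain_cat PA)" and qs: "qs \<in> mor (chain_cat PA)"
    and "pa_le PA r (last qs)" and ps_eq: "ps = chn (rpath PA r qs)"
    by (simp_all add: chain_cat_def r_def)
  from ps qs have "is_path PA ps" "is_path PA qs"
    by (simp_all add: chain_cat_mor_iff)
  then have r: "r \<in> Proj" and qs_Proj: "qs \<noteq> []" "set qs \<subseteq> Proj"
    by (auto simp: is_path_def r_def)
  have "mprod m ps = drc_eps m (chn (rpath PA r qs))"
    using drc_eps_mor[OF ps] by (simp flip: ps_eq)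
  also have "\<dots> = mprod m (rpath PA r qs)"
    using r qs_Proj set_rpath_PA[of r qs] by (simp add: drc_eps_chn rpath_eq_Nil_iff)
  finally have "mprod m ps = mprod m (rpath PA (D r) qs) \<cdot> r"
    using R_mprod_path[OF \<open>is_path PA ps\<close>] mprod_path_in_S[OF \<open>is_path PA ps\<close>] r
    by (metis mult_R_self Proj_D r_def)
  also have "\<dots> = mprod m qs \<cdot> r"
    using mprod_rpath_mult[of r qs] r qs_Proj by simp
  finally have mprod_ps: "mprod m ps = mprod m qs \<cdot> r" .
  have "proj_le m r (last qs)"
    using \<open>pa_le PA r (last qs)\<close> pa_le_PA_iff[of r "last qs"] r qs_Proj last_in_set[of qs] by blast
  then show ?thesis
    unfolding rle_CC_iff drc_eps_mor[OF ps] drc_eps_mor[OF qs]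
    using \<open>is_path PA ps\<close> \<open>is_path PA qs\<close> mprod_ps[symmetric]
    by (simp add: R_mprod_path mprod_path_in_S r_def)
qed

lemma evaluation_map: "evaluation_map PA CC (drc_eps m)"
  unfolding evaluation_map_def biordered_functor_def
proof (intro conjI ballI allI impI)
  fix ps
  assume ps: "ps \<in> mor (chain_cat PA)"
  then have "is_path PA ps"
    by (simp add: chain_cat_mor_iff)
  with ps show "drc_eps m ps \<in> mor CC"
    and "drc_eps m (cdom (chain_cat PA) ps) = cdom CC (drc_eps m ps)"
    and "drc_eps m (ccod (chain_cat PA) ps) = ccod CC (drc_eps m ps)"
    by (simp_all add: drc_eps_mor mprod_path_in_S D_mprod_path R_mprod_path chain_cat_def)
next
  fix ps qs
  assume ps: "ps \<in> mor (chain_cat PA)" and qs: "qs \<in> mor (chain_cat PA)"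
    and "ccod (chain_cat PA) ps = cdom (chain_cat PA) qs"
  then have "is_path PA ps" "is_path PA qs" "last ps = hd qs"
    by (simp_all add: chain_cat_def)
  moreover have "set (tl qs) \<subseteq> Proj"
    using \<open>is_path PA qs\<close> by (auto simp: is_path_def dest: list.set_sel(2))
  ultimately show "drc_eps m (ccomp (chain_cat PA) ps qs) = ccomp CC (drc_eps m ps) (drc_eps m qs)"
    using ps qs by (simp add: chain_cat_def drc_eps_chn drc_eps_mor mprod_path_comp is_path_def)
qed (simp_all add: drc_eps_lle drc_eps_rle)

lemma drc_eps_pair: "p \<in> Proj \<Longrightarrow> q \<in> Proj \<Longrightarrow> drc_eps m (chn [p, q]) = p \<cdot> q"
  using drc_eps_chn[of "[p, q]"] by simp

lemma lam_eq_mult: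
  assumes b: "b \<in> S" and p: "p \<in> Proj" and s: "s \<in> Proj"
  shows "lam PA CC (drc_eps m) p b s = p \<cdot> (b \<cdot> s)"
proof -
  define u where "u = R (p \<cdot> D b) \<cdot> b"
  define t where "t = R (p \<cdot> b)"
  define e1 where "e1 = D (u \<cdot> s)"
  define f1 where "f1 = D (t \<cdot> s)"
  have u: "u \<in> S" "R u = t" "p \<cdot> (u \<cdot> s) = p \<cdot> (b \<cdot> s)"
    using b p s by (simp_all add: u_def t_def mult_R_mult_Proj_assoc)
  have t: "t \<in> Proj" and e1: "e1 \<in> Proj" and f1: "f1 \<in> Proj"
    using b p s u(1) by (simp_all add: t_def e1_def f1_def)
  have "dl PA p (Delta PA CC b s) = D (p \<cdot> e1)"
    using b p s u(1) by (simp add: Delta_CC e1_def flip: u(3))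
  moreover have "dl PA (th PA (D b) p) (Delta PA CC b s) = e1"
    using b p s by (simp add: Delta_CC e1_def u_def)
  moreover have "th PA s (Theta PA CC b p) = R (t \<cdot> s)"
    and "dl PA (Theta PA CC b p) s = f1"
    using b p s by (simp_all add: Theta_CC t_def f1_def)
  moreover have "lrest CC (th PA (D b) p) b = u"
    using R_mult_proj_le[of p "D b"] b p by (simp add: lrest_CC u_def)
  moreover have "rrest CC u f1 = u \<cdot> f1"
    using D_mult_proj_le[of t s] t s u(1,2) by (simp add: rrest_CC f1_def)
  ultimately have "lam PA CC (drc_eps m) p b s = D (p \<cdot> e1) \<cdot> e1 \<cdot> (u \<cdot> f1) \<cdot> (f1 \<cdot> R (t \<cdot> s))"
    unfolding lam_def Let_def CC_simps using p e1 f1 t s by (simp add: drc_eps_pair del: mult_assoc)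
  also have "\<dots> = p \<cdot> e1 \<cdot> (u \<cdot> f1) \<cdot> (t \<cdot> s)"
    using D_Proj_mult_mult[of p e1] Proj_mult_D_R[of t s] p e1 t s by (simp add: f1_def del: mult_assoc)
  also have "\<dots> = p \<cdot> (e1 \<cdot> (u \<cdot> (R u \<cdot> s)))"
    using p e1 u(1,2) f1 t s by (simp add: f1_def)
  also have "\<dots> = p \<cdot> (b \<cdot> s)"
    using p u(1,3) s by (simp add: e1_def)
  finally show ?thesis .
qed

lemma rho_eq_mult:
  assumes b: "b \<in> S" and p: "p \<in> Proj" and s: "s \<in> Proj"
  shows "rho PA CC (drc_eps m) p b s = p \<cdot> (b \<cdot> s)"
proof -
  define z where "z = D (b \<cdot> s)"
  define d where "d = D (R b \<cdot> s)"
  define w where "w = b \<cdot> d"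
  define f2 where "f2 = R (p \<cdot> w)"
  have z: "z \<in> Proj" and d: "d \<in> Proj" and f2: "f2 \<in> Proj" and w: "w \<in> S"
    using b p s by (simp_all add: z_def d_def w_def f2_def)
  have Dw: "D w = z" and ws: "w \<cdot> s = b \<cdot> s"
    using b s D_Proj_mult_mult[of "R b" s] by (simp_all add: z_def d_def w_def)
  have "dl PA p (Delta PA CC b s) = D (p \<cdot> z)"
    and "th PA (Delta PA CC b s) p = R (p \<cdot> z)"
    using b p s by (simp_all add: Delta_CC z_def)
  moreover have "th PA s (Theta PA CC b p) = R (f2 \<cdot> s)"
    using b p s w by (simp add: Theta_CC f2_def flip: ws)
  moreover have "th PA (dl PA (R b) s) (Theta PA CC b p) = f2"
    using b p s by (simp add: Theta_CC f2_def w_def d_def)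
  moreover have "rrest CC b (dl PA (R b) s) = w"
    using D_mult_proj_le[of "R b" s] b s by (simp add: rrest_CC w_def d_def)
  moreover have "lrest CC (R (p \<cdot> z)) w = R (p \<cdot> z) \<cdot> w"
    using R_mult_proj_le[of p z] p z w by (simp add: lrest_CC Dw)
  ultimately have "rho PA CC (drc_eps m) p b s
      = D (p \<cdot> z) \<cdot> R (p \<cdot> z) \<cdot> (R (p \<cdot> z) \<cdot> w) \<cdot> (f2 \<cdot> R (f2 \<cdot> s))"
    unfolding rho_def Let_def CC_simps using p z f2 s by (simp add: drc_eps_pair del: mult_assoc)
  also have "\<dots> = p \<cdot> z \<cdot> (R (p \<cdot> z) \<cdot> w) \<cdot> (f2 \<cdot> s)"
    using Proj_mult_D_R[of p z] mult_R_mult_Proj[of s f2] p z f2 s by (simp del: mult_assoc)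
  also have "\<dots> = p \<cdot> z \<cdot> w \<cdot> (f2 \<cdot> s)"
    using mult_R_self_mult[of "p \<cdot> z" w] p z w by (simp del: mult_assoc)
  also have "\<dots> = p \<cdot> w \<cdot> (f2 \<cdot> s)"
    using p z w f2 s by (simp flip: Dw)
  also have "\<dots> = p \<cdot> w \<cdot> s"
    using mult_R_self_mult[of "p \<cdot> w" s] p w s by (simp add: f2_def del: mult_assoc)
  also have "\<dots> = p \<cdot> (b \<cdot> s)"
    using p w s by (simp add: ws)
  finally show ?thesis .
qed

theorem chained_projection_category: "chained_projection_category PA CC (drc_eps m)"
  unfolding chained_projection_category_def
  using projection_category evaluation_map lam_eq_mult rho_eq_mult by simp

end

section \<open>DRC-morphisms\<close>

locale drc_hom =
  src: drc_semigroup S m D R + tgt: drc_semigroup S' m' D' R'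
  for S :: "'a set" and m D R and S' :: "'b set" and m' D' R' +
  fixes \<phi> :: "'a \<Rightarrow> 'b"
  assumes morphism: "drc_morphism S m D R S' m' D' R' \<phi>"
begin

lemma hom_closed [simp]: "a \<in> S \<Longrightarrow> \<phi> a \<in> S'"
  and hom_mult [simp]: "a \<in> S \<Longrightarrow> b \<in> S \<Longrightarrow> \<phi> (m a b) = m' (\<phi> a) (\<phi> b)"
  and hom_D [simp]: "a \<in> S \<Longrightarrow> \<phi> (D a) = D' (\<phi> a)"
  and hom_R [simp]: "a \<in> S \<Longrightarrow> \<phi> (R a) = R' (\<phi> a)"
  using morphism unfolding drc_morphism_def by auto

lemma hom_Proj: "p \<in> src.Proj \<Longrightarrow> \<phi> p \<in> tgt.Proj"
  unfolding tgt.Proj_iff using hom_D[of p] by simp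

lemma hom_proj_le: "a \<in> S \<Longrightarrow> b \<in> S \<Longrightarrow> proj_le m a b \<Longrightarrow> proj_le m' (\<phi> a) (\<phi> b)"
  unfolding proj_le_def by (metis hom_mult)

lemma biordered_functor: "biordered_functor src.CC tgt.CC \<phi>"
  unfolding biordered_functor_def
proof (intro conjI ballI allI impI)
  fix a b
  assume "lle src.CC a b"
  then have S: "a \<in> S" "b \<in> S" and le: "proj_le m (D a) (D b)" and a: "a = m (D a) b"
    unfolding src.lle_CC_iff by blast+
  have "\<phi> a = \<phi> (m (D a) b)"
    using a by (rule arg_cong)
  also have "\<dots> = m' (D' (\<phi> a)) (\<phi> b)"
    using S by simp
  finally show "lle tgt.CC (\<phi> a) (\<phi> b)"
    unfolding tgt.lle_CC_iff using hom_proj_le[OF _ _ le] S by simp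
next
  fix a b
  assume "rle src.CC a b"
  then have S: "a \<in> S" "b \<in> S" and le: "proj_le m (R a) (R b)" and a: "a = m b (R a)"
    unfolding src.rle_CC_iff by blast+
  have "\<phi> a = \<phi> (m b (R a))"
    using a by (rule arg_cong)
  also have "\<dots> = m' (\<phi> b) (R' (\<phi> a))"
    using S by simp
  finally show "rle tgt.CC (\<phi> a) (\<phi> b)"
    unfolding tgt.rle_CC_iff using hom_proj_le[OF _ _ le] S by simp
qed simp_all

lemma projalg_morphism: "projalg_morphism src.PA tgt.PA \<phi>"
  unfolding projalg_morphism_def by (simp add: hom_Proj)

lemma hom_drc_eps:
  assumes "is_path src.PA ps"
  shows "\<phi> (drc_eps m (chn ps)) = drc_eps m' (chn (map \<phi> ps))"
proof -
  have ps: "ps \<noteq> []" "set ps \<subseteq> src.Proj"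
    using assms by (simp_all add: is_path_def)
  then have "set (map \<phi> ps) \<subseteq> tgt.Proj"
    using hom_Proj by auto
  with ps assms show ?thesis
    using mprod_map[of S m \<phi> m' ps] by (simp add: src.drc_eps_path tgt.drc_eps_chn src.Proj_subset_S)
qed

theorem chained_projection_functor:
  "chained_projection_functor src.PA src.CC (drc_eps m) tgt.PA tgt.CC (drc_eps m') \<phi>"
  unfolding chained_projection_functor_def
  using biordered_functor projalg_morphism hom_drc_eps by blast

end

theorem theorem5p15:
  fixes S :: "'a set" and m :: "'a \<Rightarrow> 'a \<Rightarrow> 'a" and D R :: "'a \<Rightarrow> 'a"
    and S' :: "'b set" and m' :: "'b \<Rightarrow> 'b \<Rightarrow> 'b" and D' R' :: "'b \<Rightarrow> 'b"
    and \<phi> :: "'a \<Rightarrow> 'b"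
  assumes "drc S m D R"
  shows "chained_projection_category (drc_proj S m D R) (drc_cat S m D R) (drc_eps m) \<and>
         (drc S' m' D' R' \<longrightarrow> drc_morphism S m D R S' m' D' R' \<phi> \<longrightarrow>
         chained_projection_functor (drc_proj S m D R) (drc_cat S m D R) (drc_eps m)
                                    (drc_proj S' m' D' R') (drc_cat S' m' D' R') (drc_eps m') \<phi>)"
proof (intro conjI impI)
  show "chained_projection_category (drc_proj S m D R) (drc_cat S m D R) (drc_eps m)"
    using assms by (intro drc_semigroup.chained_projection_category drc_semigroup.intro)
  assume "drc S' m' D' R'" "drc_morphism S m D R S' m' D' R' \<phi>"
  with assms show "chained_projection_functor (drc_proj S m D R) (drc_cat S m D R) (drc_eps m)
      (drc_proj S' m' D' R') (drc_cat S' m' D' R') (drc_eps m') \<phi>"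
    by (intro drc_hom.chained_projection_functor drc_hom.intro drc_semigroup.intro drc_hom_axioms.intro)
qed

end
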